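(* Let $(X,\Psi)$ be a $\sigma$-compact uniform space and $Y\subseteq X$. The following are equivalent: (1) $(X,\Psi)$ satisfies $\textsf{S}_1(\mathcal{O}_\Psi,\mathcal{O}_Y)$; (2) $(X,\Psi)$ satisfies $\textsf{S}_1(\mathcal{O},\mathcal{O}_Y)$; (3) ONE has no winning strategy in the game ${\sf G}_1(\mathcal{O},\mathcal{O}_Y)$; (4) ONE has no winning strategy in the game ${\sf G}_1(\mathcal{O}_\Psi,\mathcal{O}_Y)$.
   Context: A uniformity on $X$ is a filter $\Psi$ on $X\times X$ whose members contain the diagonal $\Delta_X$, closed under $U\mapsto U^{-1}$, such that for each $U\in\Psi$ there is $V\in\Psi$ with $V\circ V\subseteq U$, and with $\bigcap\Psi=\Delta_X$. $U(x)=\{y:(x,y)\in U\}$; $X$ has the topology with neighbourhood bases $\{U(x):U\in\Psi\}$. $\sigma$-compact: countable union of compact subsets. $\mathcal{O}$: open covers of $X$. For $N\in\Psi$, $\mathcal{O}(N)=\{\mathrm{Int}(N(x)):x\in X\}$, $\mathcal{O}_\Psi=\{\mathcal{O}(N):N\in\Psi\}$. $\mathcal{O}_Y$: families of open subsets of $X$ whose union contains $Y$. $\textsf{S}_1(\mathcal{A},\mathcal{B})$: for every sequence $(O_n)$ of elements of $\mathcal{A}$ there are $T_n\in O_n$ with $\{T_n:n\in\mathbb{N}\}\in\mathcal{B}$. Game ${\sf G}_1(\mathcal{A},\mathcal{B})$: in inning $n$ ONE chooses $O_n\in\mathcal{A}$, TWO responds with $T_n\in O_n$; TWO wins if $\{T_n:n\in\mathbb{N}\}\in\mathcal{B}$,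 else ONE wins. *)

theory Defs
  imports "HOL-Analysis.Analysis"
begin

definition is_uniformity :: "'a set \<Rightarrow> ('a \<times> 'a) set set \<Rightarrow> bool" where
  "is_uniformity X \<Psi> \<longleftrightarrow>
     \<Psi> \<noteq> {} \<and>
     (\<forall>U\<in>\<Psi>. U \<subseteq> X \<times> X) \<and>
     (\<forall>U V. U \<in> \<Psi> \<longrightarrow> U \<subseteq> V \<longrightarrow> V \<subseteq> X \<times> X \<longrightarrow> V \<in> \<Psi>) \<and>
     (\<forall>U\<in>\<Psi>. \<forall>V\<in>\<Psi>. U \<inter> V \<in> \<Psi>) \<and>
     (\<forall>U\<in>\<Psi>. Id_on X \<subseteq> U) \<and>
     (\<forall>U\<in>\<Psi>. converse U \<in> \<Psi>) \<and>
     (\<forall>U\<in>\<Psi>. \<exists>V\<in>\<Psi>. V O V \<subseteq> U) \<and>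
     \<Inter>\<Psi> = Id_on X"

definition uopen :: "'a set \<Rightarrow> ('a \<times> 'a) set set \<Rightarrow> 'a set \<Rightarrow> bool" where
  "uopen X \<Psi> S \<longleftrightarrow> S \<subseteq> X \<and> (\<forall>x\<in>S. \<exists>U\<in>\<Psi>. U `` {x} \<subseteq> S)"

definition utop :: "'a set \<Rightarrow> ('a \<times> 'a) set set \<Rightarrow> 'a topology" where
  "utop X \<Psi> = topology (uopen X \<Psi>)"

definition sigma_compact :: "'a topology \<Rightarrow> bool" where
  "sigma_compact T \<longleftrightarrow>
     (\<exists>K :: nat \<Rightarrow> 'a set. (\<forall>n. compactin T (K n)) \<and> (\<Union>n. K n) = topspace T)"

definition open_covers :: "'a topology \<Rightarrow> 'a set set set" where
  "open_covers T = {\<U>. (\<forall>U\<in>\<U>. openin T U) \<and> \<Union>\<U> = topspace T}"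

definition open_covers_of :: "'a topology \<Rightarrow> 'a set \<Rightarrow> 'a set set set" where
  "open_covers_of T Y = {\<U>. (\<forall>U\<in>\<U>. openin T U) \<and> Y \<subseteq> \<Union>\<U>}"

definition unif_cover :: "'a set \<Rightarrow> ('a \<times> 'a) set set \<Rightarrow> ('a \<times> 'a) set \<Rightarrow> 'a set set" where
  "unif_cover X \<Psi> N = {(utop X \<Psi>) interior_of (N `` {x}) | x. x \<in> X}"

definition unif_covers :: "'a set \<Rightarrow> ('a \<times> 'a) set set \<Rightarrow> 'a set set set" where
  "unif_covers X \<Psi> = {unif_cover X \<Psi> N | N. N \<in> \<Psi>}"

definition S1 :: "'b set set \<Rightarrow> 'b set set \<Rightarrow> bool" where
  "S1 \<A> \<B> \<longleftrightarrow>
     (\<forall>\<O> :: nat \<Rightarrow> 'b set. (\<forall>n. \<O> n \<in> \<A>) \<longrightarrow>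
        (\<exists>T :: nat \<Rightarrow> 'b. (\<forall>n. T n \<in> \<O> n) \<and> range T \<in> \<B>))"

text \<open>A strategy for ONE in G_1(A,B): maps the finite list of TWO's previous moves to
ONE's next move, an element of A.\<close>
definition one_strategy :: "'b set set \<Rightarrow> ('b list \<Rightarrow> 'b set) \<Rightarrow> bool" where
  "one_strategy \<A> \<sigma> \<longleftrightarrow> (\<forall>ts. \<sigma> ts \<in> \<A>)"

definition one_winning_strategy :: "'b set set \<Rightarrow> 'b set set \<Rightarrow> ('b list \<Rightarrow> 'b set) \<Rightarrow> bool" where
  "one_winning_strategy \<A> \<B> \<sigma> \<longleftrightarrow>
     one_strategy \<A> \<sigma> \<and>
     (\<forall>T :: nat \<Rightarrow> 'b. (\<forall>n. T n \<in> \<sigma> (map T [0..<n])) \<longrightarrow> range T \<notin> \<B>)"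

definition one_has_winning_strategy :: "'b set set \<Rightarrow> 'b set set \<Rightarrow> bool" where
  "one_has_winning_strategy \<A> \<B> \<longleftrightarrow> (\<exists>\<sigma>. one_winning_strategy \<A> \<B> \<sigma>)"

end

theory Submission
  imports Defs
begin

text \<open>Monotonicity in \<open>\<O>\<^sub>\<Psi> \<subseteq> \<O>\<close> gives (2) \<Rightarrow> (1) and (3) \<Rightarrow> (4), and a sequence
  witnessing the failure of \<open>S\<^sub>1\<close> is a winning strategy for ONE that ignores TWO; so
  everything reduces to (1) \<Rightarrow> (3). Fix a strategy \<open>\<sigma>\<close> of ONE and compact sets
  \<open>K\<^sub>0 \<subseteq> K\<^sub>1 \<subseteq> \<dots>\<close> exhausting \<open>X\<close>. At a position \<open>p\<close> of length \<open>n\<close>, shrink \<open>\<sigma> p\<close> to a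
  finite subcover of \<open>K\<^sub>n\<close> and take a Lebesgue entourage for it. If TWO only answers from
  these finite subcovers, only finitely many positions arise in round \<open>n\<close>, so one entourage
  \<open>D\<^sub>n\<close> refines all their Lebesgue entourages. Select with (1) from the covers \<open>\<O>(D\<^sub>n)\<close> so
  that every tail of the selections \<open>V\<^sub>n\<close> covers \<open>Y\<close>, and let TWO answer in round \<open>n\<close> with a
  member of the subcover containing \<open>V\<^sub>n\<close>. A point \<open>y \<in> Y \<inter> K\<^sub>m\<close> lies in some \<open>V\<^sub>n\<close> with
  \<open>n \<ge> m\<close>; being a \<open>D\<^sub>n\<close>-ball through a point of \<open>K\<^sub>n\<close>, that \<open>V\<^sub>n\<close> lies in a member of
  the subcover, so TWO's answer in round \<open>n\<close> contains \<open>y\<close> and TWO wins.\<close>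

lemma uniformity_subset: "is_uniformity X \<Psi> \<Longrightarrow> U \<in> \<Psi> \<Longrightarrow> U \<subseteq> X \<times> X"
  unfolding is_uniformity_def by meson

lemma uniformity_Int: "is_uniformity X \<Psi> \<Longrightarrow> U \<in> \<Psi> \<Longrightarrow> V \<in> \<Psi> \<Longrightarrow> U \<inter> V \<in> \<Psi>"
  unfolding is_uniformity_def by simp

lemma uniformity_refl: "is_uniformity X \<Psi> \<Longrightarrow> U \<in> \<Psi> \<Longrightarrow> x \<in> X \<Longrightarrow> (x, x) \<in> U"
  unfolding is_uniformity_def by blast

lemma uniformity_converse: "is_uniformity X \<Psi> \<Longrightarrow> U \<in> \<Psi> \<Longrightarrow> converse U \<in> \<Psi>"
  unfolding is_uniformity_def by simp

lemma uniformity_square_root: "is_uniformity X \<Psi> \<Longrightarrow> U \<in> \<Psi> \<Longrightarrow> \<exists>V\<in>\<Psi>. V O V \<subseteq> U"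
  unfolding is_uniformity_def by blast

lemma uniformity_mono:
  assumes "is_uniformity X \<Psi>" "U \<in> \<Psi>" "U \<subseteq> V" "V \<subseteq> X \<times> X"
  shows "V \<in> \<Psi>"
  using assms unfolding is_uniformity_def by meson

lemma uniformity_carrier_square:
  assumes u: "is_uniformity X \<Psi>"
  shows "X \<times> X \<in> \<Psi>"
proof -
  have "\<Psi> \<noteq> {}" using u unfolding is_uniformity_def by simp
  then obtain U where "U \<in> \<Psi>" by blast
  then show ?thesis using uniformity_mono[OF u] uniformity_subset[OF u] by (meson order_refl)
qed

lemma uniformity_finite_Inter:
  assumes u: "is_uniformity X \<Psi>" and "finite \<A>" "\<A> \<subseteq> \<Psi>"
  shows "X \<times> X \<inter> \<Inter>\<A> \<in> \<Psi>"
  using assms(2,3)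
proof (induction \<A> rule: finite_induct)
  case empty
  then show ?case using uniformity_carrier_square[OF u] by simp
next
  case (insert U \<A>)
  then have "U \<inter> (X \<times> X \<inter> \<Inter>\<A>) \<in> \<Psi>" using uniformity_Int[OF u] by simp
  moreover have "U \<inter> (X \<times> X \<inter> \<Inter>\<A>) = X \<times> X \<inter> \<Inter>(insert U \<A>)" by auto
  ultimately show ?case by simp
qed

lemma uniformity_symmetric_cube_root:
  assumes u: "is_uniformity X \<Psi>" and "U \<in> \<Psi>"
  shows "\<exists>W\<in>\<Psi>. converse W = W \<and> W O W O W \<subseteq> U"
proof -
  obtain V1 where V1: "V1 \<in> \<Psi>" "V1 O V1 \<subseteq> U" using uniformity_square_root[OF u \<open>U \<in> \<Psi>\<close>] by blast
  obtain V2 where V2: "V2 \<in> \<Psi>" "V2 O V2 \<subseteq> V1" using uniformity_square_root[OF u V1(1)] by blast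
  have "V2 \<subseteq> V2 O V2"
  proof
    fix p assume "p \<in> V2"
    moreover obtain a b where "p = (a, b)" by fastforce
    moreover have "(b, b) \<in> V2"
      using calculation uniformity_subset[OF u V2(1)] uniformity_refl[OF u V2(1)] by auto
    ultimately show "p \<in> V2 O V2" by auto
  qed
  then have "V2 \<subseteq> V1" using V2(2) by (rule order_trans)
  define W where "W = V2 \<inter> converse V2"
  have "W \<subseteq> V2" unfolding W_def by (rule Int_lower1)
  then have "W O W O W \<subseteq> V2 O V2 O V2" by (intro relcomp_mono)
  also have "\<dots> \<subseteq> V1 O V1" using V2(2) \<open>V2 \<subseteq> V1\<close> by (metis O_assoc relcomp_mono)
  also have "\<dots> \<subseteq> U" by (rule V1(2))
  finally have "W O W O W \<subseteq> U" .
  moreover have "W \<in> \<Psi>"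
    unfolding W_def using uniformity_Int[OF u V2(1) uniformity_converse[OF u V2(1)]] .
  moreover have "converse W = W" unfolding W_def by auto
  ultimately show ?thesis by blast
qed

lemma istopology_uopen:
  assumes u: "is_uniformity X \<Psi>"
  shows "istopology (uopen X \<Psi>)"
  unfolding istopology_def
proof (intro conjI allI impI)
  fix S T assume S: "uopen X \<Psi> S" and T: "uopen X \<Psi> T"
  show "uopen X \<Psi> (S \<inter> T)"
    unfolding uopen_def
  proof (intro conjI ballI)
    show "S \<inter> T \<subseteq> X" using S unfolding uopen_def by auto
    fix x assume "x \<in> S \<inter> T"
    then obtain U V where UV: "U \<in> \<Psi>" "U `` {x} \<subseteq> S" "V \<in> \<Psi>" "V `` {x} \<subseteq> T"
      using S T unfolding uopen_def by blast
    have "U \<inter> V \<in> \<Psi>" using uniformity_Int[OF u UV(1,3)] .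
    moreover have "(U \<inter> V) `` {x} \<subseteq> S \<inter> T" using UV(2,4) by blast
    ultimately show "\<exists>W\<in>\<Psi>. W `` {x} \<subseteq> S \<inter> T" by blast
  qed
next
  fix \<K> assume \<K>: "\<forall>S\<in>\<K>. uopen X \<Psi> S"
  show "uopen X \<Psi> (\<Union>\<K>)"
    unfolding uopen_def
  proof (intro conjI ballI)
    show "\<Union>\<K> \<subseteq> X" using \<K> unfolding uopen_def by blast
    fix x assume "x \<in> \<Union>\<K>"
    then obtain S where "S \<in> \<K>" "x \<in> S" by blast
    then obtain U where "U \<in> \<Psi>" "U `` {x} \<subseteq> S" using \<K> unfolding uopen_def by blast
    then show "\<exists>U\<in>\<Psi>. U `` {x} \<subseteq> \<Union>\<K>" using \<open>S \<in> \<K>\<close> by blast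
  qed
qed

lemma openin_utop: "is_uniformity X \<Psi> \<Longrightarrow> openin (utop X \<Psi>) S \<longleftrightarrow> uopen X \<Psi> S"
  unfolding utop_def using topology_inverse'[OF istopology_uopen] by metis

lemma topspace_utop:
  assumes u: "is_uniformity X \<Psi>"
  shows "topspace (utop X \<Psi>) = X"
proof
  show "topspace (utop X \<Psi>) \<subseteq> X"
    unfolding topspace_def openin_utop[OF u] uopen_def by (rule Union_least) simp
  have "uopen X \<Psi> X"
    unfolding uopen_def by (intro conjI ballI subset_refl bexI[OF _ uniformity_carrier_square[OF u]]) auto
  then show "X \<subseteq> topspace (utop X \<Psi>)"
    using openin_subset openin_utop[OF u] by metis
qed

lemma interior_of_utop:
  assumes u: "is_uniformity X \<Psi>"
  shows "utop X \<Psi> interior_of A = {x \<in> X. \<exists>E\<in>\<Psi>. E `` {x} \<subseteq> A}" (is "_ = ?I")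
proof
  show "utop X \<Psi> interior_of A \<subseteq> ?I"
    unfolding interior_of_def openin_utop[OF u] uopen_def by blast
  have "uopen X \<Psi> ?I"
    unfolding uopen_def
  proof (intro conjI ballI)
    fix x assume "x \<in> ?I"
    then obtain E where E: "E \<in> \<Psi>" "E `` {x} \<subseteq> A" by blast
    obtain V where V: "V \<in> \<Psi>" "V O V \<subseteq> E" using uniformity_square_root[OF u E(1)] by blast
    have "V `` {x} \<subseteq> ?I"
    proof
      fix z assume z: "z \<in> V `` {x}"
      then have "V `` {z} \<subseteq> A" using V(2) E(2) by blast
      then show "z \<in> ?I" using z V(1) uniformity_subset[OF u V(1)] by blast
    qed
    then show "\<exists>U\<in>\<Psi>. U `` {x} \<subseteq> ?I" using V(1) by blast
  qed blast
  moreover have "?I \<subseteq> A" using uniformity_refl[OF u] by blast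
  ultimately show "?I \<subseteq> utop X \<Psi> interior_of A"
    by (simp add: interior_of_maximal openin_utop[OF u])
qed

lemma mem_interior_of_utop_ball:
  "is_uniformity X \<Psi> \<Longrightarrow> N \<in> \<Psi> \<Longrightarrow> x \<in> X \<Longrightarrow> x \<in> utop X \<Psi> interior_of (N `` {x})"
  unfolding interior_of_utop by blast

lemma unif_covers_subset_open_covers:
  assumes u: "is_uniformity X \<Psi>"
  shows "unif_covers X \<Psi> \<subseteq> open_covers (utop X \<Psi>)"
proof
  fix C assume "C \<in> unif_covers X \<Psi>"
  then obtain N where N: "N \<in> \<Psi>" "C = unif_cover X \<Psi> N" unfolding unif_covers_def by blast
  have "\<Union>C = X"
  proof
    show "\<Union>C \<subseteq> X"
      unfolding N(2) unif_cover_def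
      using interior_of_subset_topspace[of "utop X \<Psi>"] topspace_utop[OF u] by auto
    show "X \<subseteq> \<Union>C"
      unfolding N(2) unif_cover_def using mem_interior_of_utop_ball[OF u N(1)] by auto
  qed
  moreover have "\<forall>U\<in>C. openin (utop X \<Psi>) U" unfolding N(2) unif_cover_def by auto
  ultimately show "C \<in> open_covers (utop X \<Psi>)"
    unfolding open_covers_def topspace_utop[OF u] by auto
qed

lemma unif_cover_subset_ball:
  assumes "V \<in> unif_cover X \<Psi> N"
  obtains x where "V \<subseteq> N `` {x}"
proof -
  obtain x where "V = utop X \<Psi> interior_of (N `` {x})"
    using assms unfolding unif_cover_def by auto
  then show thesis by (intro that[of x]) (simp add: interior_of_subset)
qed

lemma openin_utop_symmetric_cube_ball:
  assumes u: "is_uniformity X \<Psi>" and "openin (utop X \<Psi>) U" "x \<in> U"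
  shows "\<exists>W\<in>\<Psi>. converse W = W \<and> (W O W O W) `` {x} \<subseteq> U"
proof -
  have "uopen X \<Psi> U" using assms(2) openin_utop[OF u] by blast
  then obtain V where V: "V \<in> \<Psi>" "V `` {x} \<subseteq> U"
    using assms(3) unfolding uopen_def by blast
  obtain W where W: "W \<in> \<Psi>" "converse W = W" "W O W O W \<subseteq> V"
    using uniformity_symmetric_cube_root[OF u V(1)] by blast
  have "(W O W O W) `` {x} \<subseteq> U" using W(3) V(2) by blast
  then show ?thesis using W(1,2) by blast
qed

lemma ball_subset_cube_ball:
  assumes "converse W = W" "N \<subseteq> W" "(x, z) \<in> W" "z \<in> N `` {b}"
  shows "N `` {b} \<subseteq> (W O W O W) `` {x}"
proof
  fix w assume "w \<in> N `` {b}"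
  then have bw: "(b, w) \<in> W" using assms(2) by blast
  have "(b, z) \<in> W" using assms(2,4) by blast
  then have zb: "(z, b) \<in> W" using assms(1) by (metis converseI)
  have "(x, w) \<in> W O W O W" using assms(3) zb bw by blast
  then show "w \<in> (W O W O W) `` {x}" by blast
qed

lemma Lebesgue_entourage:
  assumes u: "is_uniformity X \<Psi>" and K: "compactin (utop X \<Psi>) K"
    and open_F: "\<forall>U\<in>\<F>. openin (utop X \<Psi>) U" and K_F: "K \<subseteq> \<Union>\<F>"
  shows "\<exists>N\<in>\<Psi>. \<forall>z\<in>K. \<exists>U\<in>\<F>. \<forall>x. z \<in> N `` {x} \<longrightarrow> N `` {x} \<subseteq> U"
proof -
  have K_X: "K \<subseteq> X" using compactin_subset_topspace[OF K] unfolding topspace_utop[OF u] .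
  have "\<forall>x\<in>K. \<exists>W. W \<in> \<Psi> \<and> converse W = W \<and> (\<exists>U\<in>\<F>. (W O W O W) `` {x} \<subseteq> U)"
  proof
    fix x assume "x \<in> K"
    then obtain U where "U \<in> \<F>" "x \<in> U" using K_F by blast
    then have "openin (utop X \<Psi>) U" using open_F by blast
    then obtain W where "W \<in> \<Psi>" "converse W = W" "(W O W O W) `` {x} \<subseteq> U"
      using openin_utop_symmetric_cube_ball[OF u _ \<open>x \<in> U\<close>] by blast
    then show "\<exists>W. W \<in> \<Psi> \<and> converse W = W \<and> (\<exists>U\<in>\<F>. (W O W O W) `` {x} \<subseteq> U)"
      using \<open>U \<in> \<F>\<close> by blast
  qed
  then obtain W where "\<forall>x\<in>K. W x \<in> \<Psi> \<and> converse (W x) = W x \<and>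
      (\<exists>U\<in>\<F>. (W x O W x O W x) `` {x} \<subseteq> U)"
    by (rule bchoice[elim_format]) blast
  then have W: "\<And>x. x \<in> K \<Longrightarrow> W x \<in> \<Psi>" "\<And>x. x \<in> K \<Longrightarrow> converse (W x) = W x"
    "\<And>x. x \<in> K \<Longrightarrow> \<exists>U\<in>\<F>. (W x O W x O W x) `` {x} \<subseteq> U"
    by simp_all
  define G where "G x = utop X \<Psi> interior_of (W x `` {x})" for x
  have "K \<subseteq> \<Union>(G ` K)"
  proof
    fix x assume "x \<in> K"
    then have "x \<in> G x"
      unfolding G_def using mem_interior_of_utop_ball[OF u] W K_X by blast
    then show "x \<in> \<Union>(G ` K)" using \<open>x \<in> K\<close> by blast
  qed
  moreover have "\<forall>V\<in>G ` K. openin (utop X \<Psi>) V" unfolding G_def by (simp add: openin_interior_of)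
  ultimately obtain \<G> where \<G>: "finite \<G>" "\<G> \<subseteq> G ` K" "K \<subseteq> \<Union>\<G>"
    using K unfolding compactin_def by meson
  then obtain J where J: "J \<subseteq> K" "finite J" "\<G> = G ` J"
    by (meson finite_subset_image)
  with \<G>(3) have "K \<subseteq> \<Union>(G ` J)" by simp
  define N where "N = X \<times> X \<inter> \<Inter>(W ` J)"
  have "W ` J \<subseteq> \<Psi>" using W J(1) by blast
  then have "N \<in> \<Psi>" unfolding N_def by (rule uniformity_finite_Inter[OF u finite_imageI[OF J(2)]])
  moreover have "\<exists>U\<in>\<F>. \<forall>b. z \<in> N `` {b} \<longrightarrow> N `` {b} \<subseteq> U" if "z \<in> K" for z
  proof -
    obtain x where x: "x \<in> J" "z \<in> G x" using \<open>K \<subseteq> \<Union>(G ` J)\<close> \<open>z \<in> K\<close> by blast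
    have "x \<in> K" using J(1) x(1) by blast
    have "(x, z) \<in> W x" using subsetD[OF interior_of_subset x(2)[unfolded G_def]] by simp
    have "N \<subseteq> W x" using x(1) unfolding N_def by (intro le_infI2 INF_lower)
    obtain U where U: "U \<in> \<F>" "(W x O W x O W x) `` {x} \<subseteq> U" using W(3)[OF \<open>x \<in> K\<close>] by blast
    have "N `` {b} \<subseteq> U" if "z \<in> N `` {b}" for b
      using ball_subset_cube_ball[OF W(2)[OF \<open>x \<in> K\<close>] \<open>N \<subseteq> W x\<close> \<open>(x, z) \<in> W x\<close> that] U(2)
      by (rule order_trans)
    then show ?thesis using U(1) by blast
  qed
  ultimately show ?thesis by blast
qed

lemma finite_subcover_Lebesgue_entourage:
  assumes u: "is_uniformity X \<Psi>" and K: "compactin (utop X \<Psi>) K"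
    and C: "C \<in> open_covers (utop X \<Psi>)" and "X \<noteq> {}"
  shows "\<exists>\<F> N. finite \<F> \<and> \<F> \<subseteq> C \<and> \<F> \<noteq> {} \<and> N \<in> \<Psi> \<and>
           (\<forall>z\<in>K. \<exists>U\<in>\<F>. \<forall>x. z \<in> N `` {x} \<longrightarrow> N `` {x} \<subseteq> U)"
proof -
  have open_C: "\<forall>U\<in>C. openin (utop X \<Psi>) U" and C_X: "\<Union>C = X"
    using C unfolding open_covers_def topspace_utop[OF u] by auto
  have "K \<subseteq> \<Union>C"
    using compactin_subset_topspace[OF K] C_X unfolding topspace_utop[OF u] by simp
  then obtain \<F>0 where \<F>0: "finite \<F>0" "\<F>0 \<subseteq> C" "K \<subseteq> \<Union>\<F>0"
    using K open_C unfolding compactin_def by meson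
  obtain U0 where "U0 \<in> C" using C_X \<open>X \<noteq> {}\<close> by blast
  define \<F> where "\<F> = insert U0 \<F>0"
  have \<F>: "finite \<F>" "\<F> \<subseteq> C" "\<F> \<noteq> {}" "K \<subseteq> \<Union>\<F>"
    using \<F>0 \<open>U0 \<in> C\<close> unfolding \<F>_def by auto
  moreover have "\<forall>U\<in>\<F>. openin (utop X \<Psi>) U" using open_C \<F>(2) by blast
  then obtain N where "N \<in> \<Psi>" "\<forall>z\<in>K. \<exists>U\<in>\<F>. \<forall>x. z \<in> N `` {x} \<longrightarrow> N `` {x} \<subseteq> U"
    using Lebesgue_entourage[OF u K _ \<F>(4)] by blast
  ultimately show ?thesis by blast
qed

lemma sigma_compact_incseq:
  assumes "sigma_compact T"
  obtains K :: "nat \<Rightarrow> 'a set"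
  where "\<And>n. compactin T (K n)" "incseq K" "(\<Union>n. K n) = topspace T"
proof -
  obtain K0 :: "nat \<Rightarrow> 'a set" where K0: "\<And>n. compactin T (K0 n)" "(\<Union>n. K0 n) = topspace T"
    using assms unfolding sigma_compact_def by metis
  define K where "K n = \<Union>(K0 ` {..n})" for n
  have "compactin T (K n)" for n
    unfolding K_def
  proof (rule compactin_Union)
    show "finite (K0 ` {..n})" by simp
    show "compactin T S" if "S \<in> K0 ` {..n}" for S using that K0(1) by blast
  qed
  moreover have "incseq K"
  proof (rule monoI)
    fix m n :: nat assume "m \<le> n"
    then have "{..m} \<subseteq> {..n}" by simp
    then show "K m \<subseteq> K n" unfolding K_def by (intro Union_mono image_mono)
  qed
  moreover have "(\<Union>n. K n) = topspace T"
    unfolding K0(2)[symmetric]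
  proof
    show "(\<Union>n. K n) \<subseteq> (\<Union>n. K0 n)" unfolding K_def by (intro UN_least Union_least) auto
    show "(\<Union>n. K0 n) \<subseteq> (\<Union>n. K n)" unfolding K_def by (intro UN_mono) auto
  qed
  ultimately show thesis by (rule that)
qed

lemma S1_antimono: "\<A> \<subseteq> \<A>' \<Longrightarrow> S1 \<A>' \<B> \<Longrightarrow> S1 \<A> \<B>"
  unfolding S1_def by blast

lemma one_has_winning_strategy_mono:
  "\<A> \<subseteq> \<A>' \<Longrightarrow> one_has_winning_strategy \<A> \<B> \<Longrightarrow> one_has_winning_strategy \<A>' \<B>"
  unfolding one_has_winning_strategy_def one_winning_strategy_def one_strategy_def by blast

lemma not_S1_imp_one_has_winning_strategy:
  assumes "\<not> S1 \<A> \<B>"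
  shows "one_has_winning_strategy \<A> \<B>"
proof -
  obtain \<O> :: "nat \<Rightarrow> _" where "\<forall>n. \<O> n \<in> \<A>" "\<forall>T. (\<forall>n. T n \<in> \<O> n) \<longrightarrow> range T \<notin> \<B>"
    using assms unfolding S1_def by blast
  then have "one_winning_strategy \<A> \<B> (\<lambda>ts. \<O> (length ts))"
    unfolding one_winning_strategy_def one_strategy_def by simp
  then show ?thesis unfolding one_has_winning_strategy_def by blast
qed

text \<open>Apply \<open>S1\<close> separately to each row \<open>k \<mapsto> prod_encode (m, k)\<close>; row \<open>m\<close> lies in the tail
  starting at \<open>m\<close>.\<close>

lemma S1_open_covers_of_tails:
  fixes \<O> :: "nat \<Rightarrow> 'a set set"
  assumes S: "S1 \<A> (open_covers_of T Y)" and \<O>: "\<And>n. \<O> n \<in> \<A>"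
  obtains V where "\<And>n. V n \<in> \<O> n" "\<And>m. Y \<subseteq> \<Union>(V ` {m..})"
proof -
  have "\<exists>W. (\<forall>k. W k \<in> \<O> (prod_encode (m, k))) \<and> range W \<in> open_covers_of T Y" for m
    using S[unfolded S1_def, rule_format, of "\<lambda>k. \<O> (prod_encode (m, k))"] \<O> by simp
  then have "\<forall>m. \<exists>W. (\<forall>k. W k \<in> \<O> (prod_encode (m, k))) \<and> Y \<subseteq> \<Union>(range W)"
    unfolding open_covers_of_def by blast
  from choice[OF this] obtain W where W: "\<And>m k. W m k \<in> \<O> (prod_encode (m, k))"
    "\<And>m. Y \<subseteq> \<Union>(range (W m))"
    by blast
  define V where "V n = W (fst (prod_decode n)) (snd (prod_decode n))" for n
  have "V n \<in> \<O> n" for n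
    using W(1)[of "fst (prod_decode n)" "snd (prod_decode n)"] unfolding V_def by simp
  moreover have "Y \<subseteq> \<Union>(V ` {m..})" for m
  proof
    fix y assume "y \<in> Y"
    then obtain k where "y \<in> W m k" using W(2) by blast
    moreover have "V (prod_encode (m, k)) = W m k" unfolding V_def by simp
    ultimately show "y \<in> \<Union>(V ` {m..})" using le_prod_encode_1 by fastforce
  qed
  ultimately show thesis using that by blast
qed

primrec reachable_positions :: "('b list \<Rightarrow> 'b set) \<Rightarrow> nat \<Rightarrow> 'b list set" where
  "reachable_positions F 0 = {[]}"
| "reachable_positions F (Suc n) = (\<Union>p\<in>reachable_positions F n. (\<lambda>U. p @ [U]) ` F p)"

lemma finite_reachable_positions:
  "(\<And>p. finite (F p)) \<Longrightarrow> finite (reachable_positions F n)"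
  by (induction n) auto

lemma length_reachable_positions: "p \<in> reachable_positions F n \<Longrightarrow> length p = n"
  by (induction n arbitrary: p) auto

lemma play_in_reachable_positions:
  "(\<And>i. T i \<in> F (map T [0..<i])) \<Longrightarrow> map T [0..<n] \<in> reachable_positions F n"
  by (induction n) auto

lemma exists_play: "\<exists>T. \<forall>n. T n = R (map T [0..<n])"
proof -
  define pos where "pos = rec_nat [] (\<lambda>_ p. p @ [R p])"
  have pos: "map (\<lambda>i. R (pos i)) [0..<n] = pos n" for n
    by (induction n) (simp_all add: pos_def)
  show ?thesis by (intro exI[of _ "\<lambda>i. R (pos i)"]) (simp add: pos)
qed

text \<open>TWO answers in round \<open>n\<close> with a permitted set containing \<open>V n\<close> whenever there is one.\<close>

lemma exists_play_covering:
  assumes F_\<sigma>: "\<And>p. F p \<subseteq> \<sigma> p" and F_ne: "\<And>p. F p \<noteq> {}"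
    and caught: "\<And>y. y \<in> Y \<Longrightarrow> \<exists>n. y \<in> V n \<and> (\<forall>p\<in>reachable_positions F n. \<exists>U\<in>F p. V n \<subseteq> U)"
  shows "\<exists>T. (\<forall>n. T n \<in> \<sigma> (map T [0..<n])) \<and> Y \<subseteq> \<Union>(range T)"
proof -
  have "\<forall>p. \<exists>U\<in>F p. (\<exists>U'\<in>F p. V (length p) \<subseteq> U') \<longrightarrow> V (length p) \<subseteq> U"
    using F_ne by blast
  then obtain R where R: "\<And>p. R p \<in> F p"
    "\<And>p U. U \<in> F p \<Longrightarrow> V (length p) \<subseteq> U \<Longrightarrow> V (length p) \<subseteq> R p"
    by metis
  obtain T where T: "\<And>n. T n = R (map T [0..<n])" using exists_play by metis
  have T_F: "T n \<in> F (map T [0..<n])" for n using R(1) T by metis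
  have "Y \<subseteq> \<Union>(range T)"
  proof
    fix y assume "y \<in> Y"
    then obtain n where n: "y \<in> V n" "\<forall>p\<in>reachable_positions F n. \<exists>U\<in>F p. V n \<subseteq> U"
      using caught by blast
    then obtain U where "U \<in> F (map T [0..<n])" "V n \<subseteq> U"
      using play_in_reachable_positions[of T F, OF T_F] by blast
    then have "V n \<subseteq> T n" using R(2) T[of n] by fastforce
    then show "y \<in> \<Union>(range T)" using n(1) by blast
  qed
  then show ?thesis using T_F F_\<sigma> by blast
qed

lemma S1_unif_covers_imp_nonempty:
  assumes u: "is_uniformity X \<Psi>" and S: "S1 (unif_covers X \<Psi>) \<B>"
  shows "X \<noteq> {}"
proof
  assume "X = {}"
  then have "unif_cover X \<Psi> (X \<times> X) = {}" unfolding unif_cover_def by simp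
  moreover have "unif_cover X \<Psi> (X \<times> X) \<in> unif_covers X \<Psi>"
    unfolding unif_covers_def using uniformity_carrier_square[OF u] by blast
  ultimately show False using S unfolding S1_def by (metis empty_iff)
qed

lemma strategy_Lebesgue_refinement:
  assumes u: "is_uniformity X \<Psi>" and K: "\<And>n. compactin (utop X \<Psi>) (K n)"
    and \<sigma>: "\<And>p. \<sigma> p \<in> open_covers (utop X \<Psi>)" and "X \<noteq> {}"
  obtains F N where "\<And>p. finite (F p)" "\<And>p. F p \<subseteq> \<sigma> p" "\<And>p. F p \<noteq> {}" "\<And>p. N p \<in> \<Psi>"
    "\<And>p z. z \<in> K (length p) \<Longrightarrow> \<exists>U\<in>F p. \<forall>x. z \<in> N p `` {x} \<longrightarrow> N p `` {x} \<subseteq> U"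
proof -
  have "\<forall>p. \<exists>F N. finite F \<and> F \<subseteq> \<sigma> p \<and> F \<noteq> {} \<and> N \<in> \<Psi> \<and>
           (\<forall>z\<in>K (length p). \<exists>U\<in>F. \<forall>x. z \<in> N `` {x} \<longrightarrow> N `` {x} \<subseteq> U)"
  proof
    fix p
    show "\<exists>F N. finite F \<and> F \<subseteq> \<sigma> p \<and> F \<noteq> {} \<and> N \<in> \<Psi> \<and>
           (\<forall>z\<in>K (length p). \<exists>U\<in>F. \<forall>x. z \<in> N `` {x} \<longrightarrow> N `` {x} \<subseteq> U)"
      by (rule finite_subcover_Lebesgue_entourage[OF u K \<sigma> \<open>X \<noteq> {}\<close>])
  qed
  from choice[OF this] obtain F where "\<forall>p. \<exists>N. finite (F p) \<and> F p \<subseteq> \<sigma> p \<and> F p \<noteq> {} \<and> N \<in> \<Psi> \<and>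
           (\<forall>z\<in>K (length p). \<exists>U\<in>F p. \<forall>x. z \<in> N `` {x} \<longrightarrow> N `` {x} \<subseteq> U)" ..
  from choice[OF this] obtain N where "\<forall>p. finite (F p) \<and> F p \<subseteq> \<sigma> p \<and> F p \<noteq> {} \<and> N p \<in> \<Psi> \<and>
           (\<forall>z\<in>K (length p). \<exists>U\<in>F p. \<forall>x. z \<in> N p `` {x} \<longrightarrow> N p `` {x} \<subseteq> U)" ..
  then show thesis by (intro that[of F N]) simp_all
qed

lemma S1_unif_covers_imp_covering_play:
  assumes u: "is_uniformity X \<Psi>" and sc: "sigma_compact (utop X \<Psi>)" and "Y \<subseteq> X"
    and S: "S1 (unif_covers X \<Psi>) (open_covers_of (utop X \<Psi>) Y)"
    and \<sigma>: "\<And>p. \<sigma> p \<in> open_covers (utop X \<Psi>)"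
  shows "\<exists>T. (\<forall>n. T n \<in> \<sigma> (map T [0..<n])) \<and> Y \<subseteq> \<Union>(range T)"
proof -
  obtain K where K: "\<And>n. compactin (utop X \<Psi>) (K n)" "incseq K" "(\<Union>n. K n) = topspace (utop X \<Psi>)"
    using sigma_compact_incseq[OF sc] by metis
  obtain F N where F: "\<And>p. finite (F p)" "\<And>p. F p \<subseteq> \<sigma> p" "\<And>p. F p \<noteq> {}" and N: "\<And>p. N p \<in> \<Psi>"
    and Lebesgue: "\<And>p z. z \<in> K (length p) \<Longrightarrow> \<exists>U\<in>F p. \<forall>x. z \<in> N p `` {x} \<longrightarrow> N p `` {x} \<subseteq> U"
    by (rule strategy_Lebesgue_refinement[where K = K and \<sigma> = \<sigma>,
          OF u K(1) \<sigma> S1_unif_covers_imp_nonempty[OF u S]]) blast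
  \<comment> \<open>Only finitely many positions are reachable in round \<open>n\<close>, so one entourage serves them all.\<close>
  define D where "D n = X \<times> X \<inter> \<Inter>(N ` reachable_positions F n)" for n
  have "D n \<in> \<Psi>" for n
  proof -
    have "N ` reachable_positions F n \<subseteq> \<Psi>" using N by blast
    then show ?thesis
      unfolding D_def using uniformity_finite_Inter[OF u finite_imageI[OF finite_reachable_positions]] F(1)
      by blast
  qed
  then have "unif_cover X \<Psi> (D n) \<in> unif_covers X \<Psi>" for n unfolding unif_covers_def by blast
  then obtain V where V: "\<And>n. V n \<in> unif_cover X \<Psi> (D n)" "\<And>m. Y \<subseteq> \<Union>(V ` {m..})"
    by (rule S1_open_covers_of_tails[where \<O> = "\<lambda>n. unif_cover X \<Psi> (D n)", OF S]) blast
  have "\<exists>n. y \<in> V n \<and> (\<forall>p\<in>reachable_positions F n. \<exists>U\<in>F p. V n \<subseteq> U)" if "y \<in> Y" for y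
  proof -
    have "y \<in> (\<Union>n. K n)" unfolding K(3) topspace_utop[OF u] using \<open>Y \<subseteq> X\<close> \<open>y \<in> Y\<close> by blast
    then obtain m where "y \<in> K m" by blast
    obtain n where "n \<ge> m" "y \<in> V n" using V(2)[of m] \<open>y \<in> Y\<close> by blast
    obtain x where "V n \<subseteq> D n `` {x}" using unif_cover_subset_ball[OF V(1)] .
    have "\<exists>U\<in>F p. V n \<subseteq> U" if p: "p \<in> reachable_positions F n" for p
    proof -
      have "y \<in> K n" using incseqD[OF K(2) \<open>n \<ge> m\<close>] \<open>y \<in> K m\<close> by blast
      then have "y \<in> K (length p)" using length_reachable_positions[OF p] by simp
      then obtain U where "U \<in> F p" "\<forall>x. y \<in> N p `` {x} \<longrightarrow> N p `` {x} \<subseteq> U"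
        using Lebesgue by blast
      moreover have "D n \<subseteq> N p" unfolding D_def using p by blast
      then have "V n \<subseteq> N p `` {x}" using \<open>V n \<subseteq> D n `` {x}\<close> by blast
      ultimately show ?thesis using \<open>y \<in> V n\<close> by blast
    qed
    then show ?thesis using \<open>y \<in> V n\<close> by blast
  qed
  then show ?thesis by (rule exists_play_covering[OF F(2,3)])
qed

lemma S1_unif_covers_imp_no_winning_strategy:
  assumes u: "is_uniformity X \<Psi>" and sc: "sigma_compact (utop X \<Psi>)" and "Y \<subseteq> X"
    and S: "S1 (unif_covers X \<Psi>) (open_covers_of (utop X \<Psi>) Y)"
  shows "\<not> one_has_winning_strategy (open_covers (utop X \<Psi>)) (open_covers_of (utop X \<Psi>) Y)"
proof
  assume "one_has_winning_strategy (open_covers (utop X \<Psi>)) (open_covers_of (utop X \<Psi>) Y)"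
  then obtain \<sigma> where "one_winning_strategy (open_covers (utop X \<Psi>)) (open_covers_of (utop X \<Psi>) Y) \<sigma>"
    unfolding one_has_winning_strategy_def by blast
  then have \<sigma>: "\<And>p. \<sigma> p \<in> open_covers (utop X \<Psi>)"
    and \<sigma>_wins: "\<And>T. \<forall>n. T n \<in> \<sigma> (map T [0..<n]) \<Longrightarrow> range T \<notin> open_covers_of (utop X \<Psi>) Y"
    unfolding one_winning_strategy_def one_strategy_def by simp_all
  obtain T where T: "\<forall>n. T n \<in> \<sigma> (map T [0..<n])" "Y \<subseteq> \<Union>(range T)"
    using S1_unif_covers_imp_covering_play[where \<sigma> = \<sigma>, OF assms \<sigma>] by blast
  have "\<forall>U\<in>range T. openin (utop X \<Psi>) U" using T(1) \<sigma> unfolding open_covers_def by blast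
  then have "range T \<in> open_covers_of (utop X \<Psi>) Y" unfolding open_covers_of_def using T(2) by blast
  then show False using \<sigma>_wins[OF T(1)] by blast
qed

theorem theorem2p5:
  fixes X :: "'a set" and \<Psi> :: "('a \<times> 'a) set set" and Y :: "'a set"
  assumes "is_uniformity X \<Psi>"
    and "sigma_compact (utop X \<Psi>)"
    and "Y \<subseteq> X"
  shows "(S1 (unif_covers X \<Psi>) (open_covers_of (utop X \<Psi>) Y)
            \<longleftrightarrow> S1 (open_covers (utop X \<Psi>)) (open_covers_of (utop X \<Psi>) Y))
       \<and> (S1 (open_covers (utop X \<Psi>)) (open_covers_of (utop X \<Psi>) Y)
            \<longleftrightarrow> \<not> one_has_winning_strategy (open_covers (utop X \<Psi>)) (open_covers_of (utop X \<Psi>) Y))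
       \<and> (\<not> one_has_winning_strategy (open_covers (utop X \<Psi>)) (open_covers_of (utop X \<Psi>) Y)
            \<longleftrightarrow> \<not> one_has_winning_strategy (unif_covers X \<Psi>) (open_covers_of (utop X \<Psi>) Y))"
proof -
  let ?\<B> = "open_covers_of (utop X \<Psi>) Y"
  have sub: "unif_covers X \<Psi> \<subseteq> open_covers (utop X \<Psi>)"
    using unif_covers_subset_open_covers[OF assms(1)] .
  have "S1 (open_covers (utop X \<Psi>)) ?\<B> \<Longrightarrow> S1 (unif_covers X \<Psi>) ?\<B>"
    using S1_antimono[OF sub] .
  moreover have "S1 (unif_covers X \<Psi>) ?\<B> \<Longrightarrow> \<not> one_has_winning_strategy (open_covers (utop X \<Psi>)) ?\<B>"
    using S1_unif_covers_imp_no_winning_strategy[OF assms] .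
  moreover have "\<not> one_has_winning_strategy (open_covers (utop X \<Psi>)) ?\<B> \<Longrightarrow>
      \<not> one_has_winning_strategy (unif_covers X \<Psi>) ?\<B>"
    using one_has_winning_strategy_mono[OF sub] by blast
  moreover note not_S1_imp_one_has_winning_strategy
  ultimately show ?thesis by blast
qed

end
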